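(* Let $\mu$ be a stationary ergodic, elliptic and non-degenerate probability measure on $\Omega$. Then $\mathbb P_0(T_{-1}=\infty)>0$ if and only if $\mathbb P_0(A^+)>0$.
   Context: Notation: $\mathbb N=\{1,2,\dots\}$. Cookie environments $\omega\in\Omega=[0,1]^{\mathbb Z\times\mathbb N}$; shift $(\theta\omega)(x,n)=\omega(x+1,n)$; $\mu$ stationary ergodic means $\theta$-invariant and ergodic; elliptic means $\mu((0,1)^{\mathbb Z\times\mathbb N})=1$. Under $P_{\omega,x}$ the excited random walk has $X_0=x$ and from $X_{n-1}$ steps to $X_{n-1}+1$ with probability $\omega(X_{n-1},\#\{k\le n-1:X_k=X_{n-1}\})$, otherwise to $X_{n-1}-1$; $\mathbb P_x=\int P_{\omega,x}\,d\mu(\omega)$. Equivalently the walk is driven by the random arrow environment $a(x,n)=\mathbf 1_{\{u(x,n)<\omega(x,n)\}}$, $u(x,n)$ i.i.d. Uniform$[0,1]$ independent of $\omega\sim\mu$, using at its $k$-th visit to $x$ the arrow $a(x,k)$ (1 = right, 0 = left). A sequence $b\in\{0,1\}^{\mathbb N}$ is non-degenerate if $b(i)\ne b(i+1)$ for infinitely many $i$; $\mu$ is non-degenerate if almost surely every $a(x,\cdot)$ is non-degenerate. $T_m=\inf\{t\ge0:X_t=m\}$, $A^+=\{\lim X_n=+\infty\}$. *)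

theory Defs
  imports "HOL-Probability.Probability"
begin

type_synonym cookie_env = "int \<times> nat \<Rightarrow> real"

text \<open>Cookie environments: omega(x,n) for x in Z, n in N = {1,2,...};
  the value at n = 0 is irrelevant. The space carries the product Borel sigma-algebra.\<close>

definition env_space :: "cookie_env measure" where
  "env_space = (\<Pi>\<^sub>M i\<in>UNIV. (borel :: real measure))"

definition shift_env :: "cookie_env \<Rightarrow> cookie_env" where
  "shift_env \<omega> = (\<lambda>(x, n). \<omega> (x + 1, n))"

definition stationary_ergodic :: "cookie_env measure \<Rightarrow> bool" where
  "stationary_ergodic \<mu> \<longleftrightarrow>
     shift_env \<in> measurable \<mu> \<mu> \<and> distr \<mu> \<mu> shift_env = \<mu> \<and>
     (\<forall>A\<in>sets \<mu>. shift_env -` A \<inter> space \<mu> = A \<longrightarrow> measure \<mu> A = 0 \<or> measure \<mu> A = 1)"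

definition elliptic :: "cookie_env measure \<Rightarrow> bool" where
  "elliptic \<mu> \<longleftrightarrow> (AE \<omega> in \<mu>. \<forall>x. \<forall>n\<ge>1. 0 < \<omega> (x, n) \<and> \<omega> (x, n) < 1)"

definition unif_space :: "(int \<times> nat \<Rightarrow> real) measure" where
  "unif_space = (\<Pi>\<^sub>M i\<in>UNIV. uniform_measure lborel {0..1::real})"

text \<open>Joint space of (omega, u); its measure is the annealed measure.\<close>
definition joint_space :: "cookie_env measure \<Rightarrow> (cookie_env \<times> (int \<times> nat \<Rightarrow> real)) measure" where
  "joint_space \<mu> = \<mu> \<Otimes>\<^sub>M unif_space"

text \<open>Arrow environment a(x,n) = 1 iff u(x,n) < omega(x,n); True = right step.\<close>
definition arrows :: "cookie_env \<Rightarrow> (int \<times> nat \<Rightarrow> real) \<Rightarrow> int \<Rightarrow> nat \<Rightarrow> bool" where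
  "arrows \<omega> u x n \<longleftrightarrow> u (x, n) < \<omega> (x, n)"

definition nondegenerate_seq :: "(nat \<Rightarrow> bool) \<Rightarrow> bool" where
  "nondegenerate_seq b \<longleftrightarrow> infinite {i. 1 \<le> i \<and> b i \<noteq> b (Suc i)}"

definition nondegenerate :: "cookie_env measure \<Rightarrow> bool" where
  "nondegenerate \<mu> \<longleftrightarrow>
     (AE p in joint_space \<mu>. \<forall>x. nondegenerate_seq (arrows (fst p) (snd p) x))"

text \<open>Walk driven by arrows: state at time n is (X_n, c) with
  c y = number of k \<le> n with X_k = y. From X_n it uses arrow a(X_n, c X_n).\<close>
fun erw_state :: "(int \<Rightarrow> nat \<Rightarrow> bool) \<Rightarrow> int \<Rightarrow> nat \<Rightarrow> int \<times> (int \<Rightarrow> nat)" where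
  "erw_state a x0 0 = (x0, (\<lambda>_. 0)(x0 := 1))"
| "erw_state a x0 (Suc n) =
     (let (p, c) = erw_state a x0 n;
          p' = (if a p (c p) then p + 1 else p - 1)
      in (p', c(p' := Suc (c p'))))"

definition erw :: "(int \<Rightarrow> nat \<Rightarrow> bool) \<Rightarrow> int \<Rightarrow> nat \<Rightarrow> int" where
  "erw a x0 n = fst (erw_state a x0 n)"

end

theory Submission
  imports Defs
begin

text \<open>If the walk never visits \<open>-1\<close>, non-degeneracy forces it to be transient to the right: a
  site visited infinitely often has infinitely many left arrows in its cookie stack, so its left
  neighbour is visited infinitely often too, and recurrence would propagate down to \<open>-1\<close>.

  Conversely, a walk tending to \<open>+\<infinity>\<close> stays above some level \<open>m \<le> 0\<close> and visits each negative
  site at most \<open>K\<close> times, on an event of positive probability. Freezing the finitely many arrows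
  that such a walk can read in \<open>[m, 0)\<close> and, by ellipticity, inserting an extra right arrow at the
  bottom of each of these stacks yields a walk from \<open>m\<close> that first runs to \<open>0\<close> and then follows
  the old path, never going below \<open>m\<close>. Stationarity moves the starting point from \<open>m\<close> to \<open>0\<close>.\<close>

definition erw_move :: "int \<times> (int \<Rightarrow> nat) \<Rightarrow> bool \<Rightarrow> int \<times> (int \<Rightarrow> nat)" where
  "erw_move s b =
     (let p' = if b then fst s + 1 else fst s - 1 in (p', (snd s)(p' := Suc (snd s p'))))"

lemma erw_state_Suc_move:
  "erw_state a x0 (Suc n) = erw_move (erw_state a x0 n)
     (a (fst (erw_state a x0 n)) (snd (erw_state a x0 n) (fst (erw_state a x0 n))))"
  by (simp add: erw_move_def Let_def split: prod.split)

lemma erw_0 [simp]: "erw a x0 0 = x0"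
  by (simp add: erw_def)

lemma erw_Suc:
  "erw a x0 (Suc n) =
     (if a (erw a x0 n) (snd (erw_state a x0 n) (erw a x0 n)) then erw a x0 n + 1 else erw a x0 n - 1)"
  by (simp add: erw_def erw_state_Suc_move erw_move_def Let_def del: erw_state.simps(2))

lemma card_visits_0: "card {j. j \<le> (0::nat) \<and> w j = y} = (if w 0 = y then 1 else 0)"
proof -
  have "{j. j \<le> (0::nat) \<and> w j = y} = (if w 0 = y then {0} else {})" by auto
  then show ?thesis by simp
qed

lemma card_visits_Suc:
  "card {j. j \<le> Suc n \<and> w j = y} = card {j. j \<le> n \<and> w j = y} + (if w (Suc n) = y then 1 else 0)"
proof -
  have "{j. j \<le> Suc n \<and> w j = y} = {j. j \<le> n \<and> w j = y} \<union> (if w (Suc n) = y then {Suc n} else {})"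
    by (auto simp: le_Suc_eq)
  then show ?thesis by (simp add: card_insert_if)
qed

lemma card_visits_le: "card {j. j \<le> n \<and> w j = y} \<le> Suc n"
  using card_mono[of "{..n}" "{j. j \<le> n \<and> w j = y}"] by auto

lemma erw_state_local_time: "snd (erw_state a x0 n) y = card {j. j \<le> n \<and> erw a x0 j = y}"
proof (induction n)
  case 0
  have "snd (erw_state a x0 0) y = (if erw a x0 0 = y then 1 else 0)" by (simp add: erw_def)
  then show ?case by (simp only: card_visits_0)
next
  case (Suc n)
  have "snd (erw_state a x0 (Suc n)) y =
      snd (erw_state a x0 n) y + (if erw a x0 (Suc n) = y then 1 else 0)"
    by (simp add: erw_state_Suc_move erw_move_def Let_def erw_def del: erw_state.simps(2))
  then show ?case by (simp add: Suc card_visits_Suc)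
qed

lemma erw_state_local_time_current_pos: "1 \<le> snd (erw_state a x0 n) (erw a x0 n)"
proof -
  have "card {j. j \<le> n \<and> erw a x0 j = erw a x0 n} > 0"
    by (rule card_gt_0_iff[THEN iffD2]) (auto intro: finite_subset[of _ "{..n}"])
  then show ?thesis by (simp add: erw_state_local_time)
qed

lemma exists_visit_with_local_time:
  fixes w :: "nat \<Rightarrow> 'a"
  assumes inf: "infinite {n. w n = x}" and k: "1 \<le> k"
  shows "\<exists>n. w n = x \<and> card {j. j \<le> n \<and> w j = x} = k"
proof -
  define L where "L n = card {j. j \<le> n \<and> w j = x}" for n
  obtain B where B: "B \<subseteq> {n. w n = x}" "finite B" "card B = k"
    using infinite_arbitrarily_large[OF inf] by blast
  with k have "B \<noteq> {}" by auto
  with B have "B \<subseteq> {j. j \<le> Max B \<and> w j = x}" by auto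
  then have "k \<le> L (Max B)"
    unfolding L_def \<open>card B = k\<close>[symmetric] by (intro card_mono) auto
  define n where "n = (LEAST n. k \<le> L n)"
  have first: "k \<le> L n"
    unfolding n_def by (rule LeastI) fact
  have before: "L m < k" if "m < n" for m
    using not_less_Least[OF that[unfolded n_def]] by simp
  have "L n = k \<and> w n = x"
  proof (cases n)
    case 0
    have "L 0 = (if w 0 = x then 1 else 0)" by (simp only: L_def card_visits_0)
    with 0 first k show ?thesis by (auto split: if_splits)
  next
    case (Suc n')
    have "L (Suc n') = L n' + (if w (Suc n') = x then 1 else 0)" by (simp only: L_def card_visits_Suc)
    with Suc first before[of n'] show ?thesis by (auto split: if_splits)
  qed
  then show ?thesis unfolding L_def by blast
qed

lemma nondegenerate_seq_infinite_False:
  assumes "nondegenerate_seq b"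
  shows "infinite {k. 1 \<le> k \<and> \<not> b k}"
  unfolding infinite_nat_iff_unbounded
proof
  fix m
  obtain i where i: "m < i" "1 \<le> i" "b i \<noteq> b (Suc i)"
    using assms unfolding nondegenerate_seq_def infinite_nat_iff_unbounded by blast
  then show "\<exists>k>m. k \<in> {k. 1 \<le> k \<and> \<not> b k}"
    by (cases "b i") (auto intro: exI[of _ "Suc i"] exI[of _ i])
qed

text \<open>By non-degeneracy some cookie \<open>k > m\<close> at \<open>x\<close> carries a left arrow; it is used at the
  \<open>k\<close>-th visit to \<open>x\<close>, which is followed by a step to \<open>x - 1\<close> after time \<open>m\<close>.\<close>

lemma erw_recurrent_left:
  assumes nd: "nondegenerate_seq (a x)" and inf: "infinite {n. erw a x0 n = x}"
  shows "infinite {n. erw a x0 n = x - 1}"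
  unfolding infinite_nat_iff_unbounded
proof
  fix m
  obtain k where k: "m < k" "1 \<le> k" "\<not> a x k"
    using nondegenerate_seq_infinite_False[OF nd] unfolding infinite_nat_iff_unbounded by blast
  obtain n where n: "erw a x0 n = x" "card {j. j \<le> n \<and> erw a x0 j = x} = k"
    using exists_visit_with_local_time[OF inf k(2)] by blast
  have "m < Suc n" using k(1) n(2) card_visits_le[of n "erw a x0" x] by simp
  moreover have "erw a x0 (Suc n) = x - 1"
    using n k by (simp add: erw_Suc erw_state_local_time)
  ultimately show "\<exists>n>m. n \<in> {n. erw a x0 n = x - 1}" by blast
qed

lemma erw_ge_if_never_below:
  assumes "\<forall>n. erw a x0 n \<noteq> x0 - 1"
  shows "x0 \<le> erw a x0 n"
proof (induction n)
  case (Suc n)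
  then show ?case using assms[rule_format, of "Suc n"] by (auto simp: erw_Suc)
qed simp

lemma erw_tendsto_at_top_if_never_below:
  assumes nd: "\<forall>x. nondegenerate_seq (a x)" and never: "\<forall>n. erw a x0 n \<noteq> x0 - 1"
  shows "filterlim (erw a x0) at_top sequentially"
proof -
  let ?w = "erw a x0"
  have transient: "finite {n. ?w n = x0 + int k}" for k
  proof (induction k)
    case 0
    show ?case using erw_recurrent_left[of a x0 x0] nd never by force
  next
    case (Suc k)
    then show ?case using erw_recurrent_left[of a "x0 + int (Suc k)" x0] nd by auto
  qed
  have "eventually (\<lambda>n. Z \<le> ?w n) sequentially" for Z
  proof -
    have "{n. ?w n < Z} \<subseteq> (\<Union>k\<in>{..nat (Z - x0)}. {n. ?w n = x0 + int k})"
    proof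
      fix n assume "n \<in> {n. ?w n < Z}"
      then show "n \<in> (\<Union>k\<in>{..nat (Z - x0)}. {n. ?w n = x0 + int k})"
        using erw_ge_if_never_below[OF never, of n] by (intro UN_I[of "nat (?w n - x0)"]) auto
    qed
    then have "finite {n. ?w n < Z}"
      using transient by (auto intro: finite_subset)
    then obtain N where "{n. ?w n < Z} \<subseteq> {..<N}"
      using finite_nat_bounded by blast
    then show ?thesis
      unfolding eventually_sequentially by (metis lessThan_iff mem_Collect_eq not_le subset_eq)
  qed
  then show ?thesis unfolding filterlim_at_top by blast
qed

lemma erw_state_translate:
  "erw_state (\<lambda>x. a (x + k)) x0 n =
     (fst (erw_state a (x0 + k) n) - k, \<lambda>y. snd (erw_state a (x0 + k) n) (y + k))"
proof (induction n)
  case (Suc n)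
  show ?case
    unfolding erw_state_Suc_move[of "\<lambda>x. a (x + k)"] erw_state_Suc_move[of a] Suc
    by (auto simp: erw_move_def Let_def fun_eq_iff)
qed (auto simp: fun_eq_iff)

lemma erw_translate: "erw (\<lambda>x. a (x + k)) x0 n = erw a (x0 + k) n - k"
  by (simp add: erw_def erw_state_translate del: erw_state.simps)

definition confined :: "int \<Rightarrow> nat \<Rightarrow> (int \<Rightarrow> nat \<Rightarrow> bool) \<Rightarrow> bool" where
  "confined m K a \<longleftrightarrow> (\<forall>n. m \<le> erw a 0 n \<and> (\<forall>x<0. snd (erw_state a 0 n) x \<le> K))"

lemma erw_tendsto_at_top_imp_confined:
  assumes "filterlim (erw a 0) at_top sequentially"
  shows "\<exists>m\<le>0. \<exists>K. confined m K a"
proof -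
  obtain N where N: "\<forall>n\<ge>N. 0 \<le> erw a 0 n"
    using assms unfolding filterlim_at_top eventually_sequentially by blast
  define m where "m = min 0 (Min (erw a 0 ` {..N}))"
  have "m \<le> erw a 0 n" for n
    using N Min_le[of "erw a 0 ` {..N}" "erw a 0 n"] unfolding m_def
    by (cases "n \<le> N") (auto simp: min.coboundedI1 min.coboundedI2)
  moreover have "snd (erw_state a 0 n) x \<le> N" if "x < 0" for n x
  proof -
    have "{j. j \<le> n \<and> erw a 0 j = x} \<subseteq> {..<N}"
      using N that by (auto simp: not_less[symmetric])
    then show ?thesis
      using card_mono[of "{..<N}"] by (fastforce simp: erw_state_local_time)
  qed
  moreover have "m \<le> 0" by (simp add: m_def)
  ultimately show ?thesis unfolding confined_def by blast
qed

lemma erw_state_run_right: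
  assumes "\<forall>i<d. a (x0 + int i) 1"
  shows "erw_state a x0 d = (x0 + int d, \<lambda>y. if x0 \<le> y \<and> y \<le> x0 + int d then 1 else 0)"
  using assms
proof (induction d)
  case (Suc d)
  then have "a (x0 + int d) 1" by simp
  with Suc show ?case unfolding erw_state_Suc_move[of a]
    by (auto simp: erw_move_def Let_def fun_eq_iff)
qed (auto simp: fun_eq_iff)

text \<open>Inserting a right arrow below the first \<open>K\<close> cookies of every site of \<open>[m, 0)\<close>:
  the new walk started at \<open>m\<close> runs straight to \<open>0\<close> on the inserted arrows and then
  follows the old walk, with every local time in \<open>[m, 0)\<close> raised by one.\<close>

lemma confined_insert_right_arrows:
  assumes m: "m \<le> 0" and conf: "confined m K a"
    and first: "\<forall>x. m \<le> x \<and> x < 0 \<longrightarrow> a' x 1"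
    and later: "\<forall>x j. m \<le> x \<and> x < 0 \<and> 1 \<le> j \<and> j \<le> K \<longrightarrow> a' x (Suc j) = a x j"
    and outside: "\<forall>x k. \<not> (m \<le> x \<and> x < 0) \<longrightarrow> a' x k = a x k"
  shows "m \<le> erw a' m n"
proof -
  define d where "d = nat (- m)"
  have md: "m + int d = 0" using m by (simp add: d_def)
  then have "\<forall>i<d. a' (m + int i) 1"
    using first by simp
  then have "erw_state a' m d = (m + int d, \<lambda>y. if m \<le> y \<and> y \<le> m + int d then 1 else 0)"
    by (rule erw_state_run_right)
  then have run: "erw_state a' m d = (0, \<lambda>y. if m \<le> y \<and> y \<le> 0 then 1 else 0)"
    by (simp only: md)
  have follow: "erw_state a' m (d + n) = (fst (erw_state a 0 n),
      \<lambda>y. snd (erw_state a 0 n) y + (if m \<le> y \<and> y < 0 then 1 else 0))" for n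
  proof (induction n)
    case 0
    then show ?case using run m by (auto simp: fun_eq_iff)
  next
    case (Suc n)
    obtain p c where pc: "erw_state a 0 n = (p, c)" by fastforce
    have "1 \<le> c p"
      using erw_state_local_time_current_pos[of a 0 n] by (simp add: pc erw_def)
    moreover have "m \<le> p \<and> p < 0 \<Longrightarrow> c p \<le> K"
      using conf pc unfolding confined_def by (metis snd_conv)
    ultimately have "a' p (c p + (if m \<le> p \<and> p < 0 then 1 else 0)) = a p (c p)"
      using later outside by auto
    then show ?case
      unfolding add_Suc_right erw_state_Suc_move[of a'] erw_state_Suc_move[of a] Suc pc
      by (auto simp: erw_move_def Let_def fun_eq_iff)
  qed
  show ?thesis
  proof (cases "n \<le> d")
    case True
    then show ?thesis using erw_state_run_right[of n a' m] first unfolding d_def by (simp add: erw_def)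
  next
    case False
    then obtain k where "n = d + k" by (metis le_add_diff_inverse nat_le_linear)
    then show ?thesis using follow[of k] conf by (simp add: erw_def confined_def)
  qed
qed

lemma finite_range_erw_state: "finite (range (\<lambda>a. erw_state a x0 n))"
proof (induction n)
  case (Suc n)
  have "erw_state a x0 (Suc n) \<in> case_prod erw_move ` (range (\<lambda>a. erw_state a x0 n) \<times> UNIV)" for a
    unfolding erw_state_Suc_move by (rule image_eqI[OF _ SigmaI]) (auto simp del: erw_state.simps)
  then have "range (\<lambda>a. erw_state a x0 (Suc n)) \<subseteq> case_prod erw_move ` (range (\<lambda>a. erw_state a x0 n) \<times> UNIV)"
    by blast
  moreover have "finite (case_prod erw_move ` (range (\<lambda>a. erw_state a x0 n) \<times> UNIV))"
    using Suc by simp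
  ultimately show ?case by (rule finite_subset)
qed simp

lemma sets_Collect_bool_comp:
  assumes "{p \<in> space M. B p} \<in> sets M"
  shows "{p \<in> space M. Q (B p)} \<in> sets M"
proof -
  have "{p \<in> space M. Q (B p)} = {p \<in> space M. (Q True \<and> B p) \<or> (Q False \<and> \<not> B p)}"
    by (auto; metis (full_types))
  then show ?thesis using assms by auto
qed

text \<open>The state at time \<open>n\<close> takes only finitely many values, so the event splits into a
  finite union according to the state at time \<open>n - 1\<close>.\<close>

lemma sets_Collect_erw_state:
  assumes A: "\<And>x k. {p \<in> space M. A p x k} \<in> sets M"
  shows "{p \<in> space M. P (erw_state (A p) x0 n)} \<in> sets M"
proof (induction n arbitrary: P)
  case (Suc n)
  let ?R = "range (\<lambda>a. erw_state a x0 n)"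
  have "{p \<in> space M. P (erw_state (A p) x0 (Suc n))} =
     (\<Union>r\<in>?R. {p \<in> space M. erw_state (A p) x0 n = r} \<inter>
        {p \<in> space M. P (erw_move r (A p (fst r) (snd r (fst r))))})"
    by (auto simp: erw_state_Suc_move simp del: erw_state.simps)
  then show ?case
    by (simp only:) (intro sets.finite_UN finite_range_erw_state ballI sets.Int Suc
        sets_Collect_bool_comp[OF A])
qed simp

lemma sets_Collect_erw_state_all:
  assumes "\<And>x k. {p \<in> space M. A p x k} \<in> sets M"
  shows "{p \<in> space M. \<forall>n. P n (erw_state (A p) x0 n)} \<in> sets M"
  by (intro sets.sets_Collect_countable_All sets_Collect_erw_state[OF assms])

lemma sets_Collect_erw_tendsto:
  assumes "\<And>x k. {p \<in> space M. A p x k} \<in> sets M"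
  shows "{p \<in> space M. filterlim (erw (A p) x0) at_top sequentially} \<in> sets M"
proof -
  have "filterlim (erw a x0) at_top sequentially \<longleftrightarrow>
      (\<forall>Z::int. \<exists>N::nat. \<forall>n. (\<lambda>s. N \<le> n \<longrightarrow> Z \<le> fst s) (erw_state a x0 n))" for a
    unfolding filterlim_at_top eventually_sequentially erw_def by simp
  then show ?thesis
    by (simp only:) (intro sets.sets_Collect_countable_All sets.sets_Collect_countable_Ex
        sets_Collect_erw_state[OF assms])
qed

lemma sets_Collect_confined:
  assumes "\<And>x k. {p \<in> space M. A p x k} \<in> sets M"
  shows "{p \<in> space M. confined m K (A p)} \<in> sets M"
  unfolding confined_def erw_def
  by (rule sets_Collect_erw_state_all[OF assms, where P = "\<lambda>_ s. m \<le> fst s \<and> (\<forall>x<0. snd s x \<le> K)"])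

lemma emeasure_pos_countable_cover:
  assumes "countable I" and cover: "A \<subseteq> (\<Union>i\<in>I. B i)" and B: "\<And>i. i \<in> I \<Longrightarrow> B i \<in> sets M"
    and pos: "emeasure M A > 0"
  shows "\<exists>i\<in>I. emeasure M (B i) > 0"
proof (rule ccontr)
  assume "\<not> ?thesis"
  then have "(\<Union>i\<in>I. B i) \<in> null_sets M"
    using B by (intro null_sets_UN' \<open>countable I\<close>) (auto simp: null_sets_def not_gr_zero)
  then have "emeasure M A \<le> 0"
    using emeasure_mono[OF cover, of M] by (auto simp: null_sets_def)
  with pos show False by simp
qed

abbreviation unif01 :: "real measure" where
  "unif01 \<equiv> uniform_measure lborel {0..1}"

lemma prob_space_unif01: "prob_space unif01"
  by (rule prob_space_uniform_measure) auto

lemma prob_space_unif_space: "prob_space unif_space"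
  unfolding unif_space_def by (rule prob_space_PiM) (rule prob_space_unif01)

lemma space_unif_space [simp]: "space unif_space = UNIV"
  by (simp add: unif_space_def space_PiM)

lemma measurable_unif_space_coord: "(\<lambda>u. u s) \<in> borel_measurable unif_space"
  unfolding unif_space_def
  using measurable_component_singleton[of s UNIV "\<lambda>_. unif01"] measurable_cong_sets by force

lemma sets_unif_space_coord: "B \<in> sets borel \<Longrightarrow> {u. u s \<in> B} \<in> sets unif_space"
  using measurable_sets[OF measurable_unif_space_coord] by (simp add: vimage_def)

lemma emeasure_unif_space_Int_coord:
  assumes Q: "Q \<in> sets unif_space" and indep: "\<forall>u t. u \<in> Q \<longleftrightarrow> u(s := t) \<in> Q"
    and A: "A \<in> sets borel"
  shows "emeasure unif_space (Q \<inter> {u. u s \<in> A}) = emeasure unif01 A * emeasure unif_space Q"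
proof -
  define I where "I = UNIV - {s}"
  define P where "P = (\<Pi>\<^sub>M i\<in>I. unif01)"
  interpret P: prob_space P unfolding P_def by (rule prob_space_PiM) (rule prob_space_unif01)
  have "insert s I = UNIV" unfolding I_def by auto
  then have distr_eq: "distr (unif01 \<Otimes>\<^sub>M P) unif_space (\<lambda>(x, X). X(s := x)) = unif_space"
    unfolding P_def unif_space_def
    using distr_pair_PiM_eq_PiM[OF prob_space_unif01 prob_space_unif01, of I s] by simp
  have "(\<lambda>p. (snd p)(s := fst p)) \<in> measurable (unif01 \<Otimes>\<^sub>M P) unif_space"
    unfolding unif_space_def P_def by (rule measurable_fun_upd[where J=I]) (auto simp: I_def)
  then have upd: "(\<lambda>(x, X). X(s := x)) \<in> measurable (unif01 \<Otimes>\<^sub>M P) unif_space"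
    by (simp add: case_prod_beta')
  have "(\<lambda>X. X(s := 0::real)) \<in> measurable P unif_space"
    unfolding unif_space_def P_def by (rule measurable_fun_upd[where J=I]) (auto simp: I_def)
  then have Q': "(\<lambda>X. X(s := 0)) -` Q \<inter> space P \<in> sets P" (is "?Q' \<in> _")
    using Q by (rule measurable_sets)
  have split: "emeasure unif_space (Q \<inter> {u. u s \<in> B}) = emeasure unif01 B * emeasure P ?Q'"
    if B: "B \<in> sets borel" for B
  proof -
    have QB: "Q \<inter> {u. u s \<in> B} \<in> sets unif_space"
      using Q sets_unif_space_coord[OF B] by (rule sets.Int)
    have "(\<lambda>(x, X). X(s := x)) -` (Q \<inter> {u. u s \<in> B}) \<inter> space (unif01 \<Otimes>\<^sub>M P) = B \<times> ?Q'"
    proof -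
      have "X(s := x) \<in> Q \<longleftrightarrow> X(s := 0) \<in> Q" for X x
        using indep[rule_format, of "X(s := x)" 0] by simp
      then show ?thesis by (auto simp: space_pair_measure; metis)
    qed
    then have "emeasure unif_space (Q \<inter> {u. u s \<in> B}) = emeasure (unif01 \<Otimes>\<^sub>M P) (B \<times> ?Q')"
      by (subst distr_eq[symmetric], subst emeasure_distr[OF upd QB]) simp
    also have "\<dots> = emeasure unif01 B * emeasure P ?Q'"
      using B Q' by (intro P.emeasure_pair_measure_Times) auto
    finally show ?thesis .
  qed
  have "emeasure unif01 UNIV = 1"
    using prob_space.emeasure_space_1[OF prob_space_unif01] by simp
  then have "emeasure unif_space Q = emeasure P ?Q'"
    using split[of UNIV] by simp
  then show ?thesis using split[OF A] by simp
qed

lemma emeasure_unif_space_Int_coords: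
  assumes "finite S" and Q: "Q \<in> sets unif_space"
    and indep: "\<forall>u s t. s \<in> S \<longrightarrow> (u \<in> Q \<longleftrightarrow> u(s := t) \<in> Q)"
    and A: "\<forall>s\<in>S. A s \<in> sets borel"
  shows "emeasure unif_space (Q \<inter> {u. \<forall>s\<in>S. u s \<in> A s}) =
    (\<Prod>s\<in>S. emeasure unif01 (A s)) * emeasure unif_space Q"
  using assms(1) indep A
proof (induction S rule: finite_induct)
  case (insert s S)
  define Q1 where "Q1 = Q \<inter> {u. \<forall>s\<in>S. u s \<in> A s}"
  have "{u. \<forall>s\<in>S. u s \<in> A s} = {u \<in> space unif_space. \<forall>s\<in>S. u s \<in> A s}" by simp
  also have "\<dots> \<in> sets unif_space"
    using insert by (intro sets.sets_Collect_finite_All) (auto intro: sets_unif_space_coord)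
  finally have Q1: "Q1 \<in> sets unif_space" unfolding Q1_def using Q by (intro sets.Int)
  have "\<forall>u t. u \<in> Q1 \<longleftrightarrow> u(s := t) \<in> Q1"
  proof (intro allI)
    fix u t
    have "u \<in> Q \<longleftrightarrow> u(s := t) \<in> Q" using insert.prems(1) by blast
    moreover have "(\<forall>s'\<in>S. (u(s := t)) s' \<in> A s') \<longleftrightarrow> (\<forall>s'\<in>S. u s' \<in> A s')"
      using insert.hyps(2) by auto
    ultimately show "u \<in> Q1 \<longleftrightarrow> u(s := t) \<in> Q1" unfolding Q1_def by auto
  qed
  moreover have "Q \<inter> {u. \<forall>s\<in>insert s S. u s \<in> A s} = Q1 \<inter> {u. u s \<in> A s}"
    unfolding Q1_def by auto
  moreover have "emeasure unif_space Q1 = (\<Prod>s\<in>S. emeasure unif01 (A s)) * emeasure unif_space Q"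
    unfolding Q1_def using insert.IH insert.prems by auto
  ultimately show ?case
    using emeasure_unif_space_Int_coord[OF Q1] insert by (simp add: mult.assoc)
qed simp

lemma emeasure_unif01_split_pos:
  assumes "0 < c" "c < 1"
  shows "emeasure unif01 {..<c} > 0" "emeasure unif01 {c..} > 0"
proof -
  have "emeasure unif01 {..<c} = emeasure lborel ({0..1} \<inter> {..<c}) / emeasure lborel {0..1::real}"
    by (rule emeasure_uniform_measure) simp_all
  also have "{0..1} \<inter> {..<c} = {0..<c}" using assms by auto
  finally show "emeasure unif01 {..<c} > 0" using assms by (simp add: ennreal_zero_less_divide)
  have "emeasure unif01 {c..} = emeasure lborel ({0..1} \<inter> {c..}) / emeasure lborel {0..1::real}"
    by (rule emeasure_uniform_measure) simp_all
  also have "{0..1} \<inter> {c..} = {c..1}" using assms by auto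
  finally show "emeasure unif01 {c..} > 0" using assms by (simp add: ennreal_zero_less_divide)
qed

lemma emeasure_pair_pos_by_sections:
  assumes N: "sigma_finite_measure N"
    and R: "R \<in> sets (M \<Otimes>\<^sub>M N)" and R': "R' \<in> sets (M \<Otimes>\<^sub>M N)"
    and pos: "emeasure (M \<Otimes>\<^sub>M N) R > 0"
    and sections: "AE x in M. emeasure N (Pair x -` R') = 0 \<longrightarrow> emeasure N (Pair x -` R) = 0"
  shows "emeasure (M \<Otimes>\<^sub>M N) R' > 0"
proof -
  interpret N: sigma_finite_measure N by (fact N)
  have "\<not> (AE x in M. emeasure N (Pair x -` R) = 0)"
    using pos N.emeasure_pair_measure_alt[OF R] nn_integral_0_iff_AE[OF N.measurable_emeasure_Pair[OF R]]
    by auto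
  moreover have "AE x in M. emeasure N (Pair x -` R) = 0" if "AE x in M. emeasure N (Pair x -` R') = 0"
    using that sections by eventually_elim simp
  ultimately have "\<not> (AE x in M. emeasure N (Pair x -` R') = 0)" by blast
  then show ?thesis
    using N.emeasure_pair_measure_alt[OF R'] nn_integral_0_iff_AE[OF N.measurable_emeasure_Pair[OF R']]
    by (auto simp: zero_less_iff_neq_zero)
qed

abbreviation arrow_env :: "cookie_env \<times> (int \<times> nat \<Rightarrow> real) \<Rightarrow> int \<Rightarrow> nat \<Rightarrow> bool" where
  "arrow_env p \<equiv> arrows (fst p) (snd p)"

definition pinned :: "(int \<times> nat) set \<Rightarrow> (int \<times> nat \<Rightarrow> bool) \<Rightarrow> (int \<Rightarrow> nat \<Rightarrow> bool) \<Rightarrow> bool" where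
  "pinned S b a \<longleftrightarrow> (\<forall>s\<in>S. a (fst s) (snd s) = b s)"

definition override_arrows ::
    "(int \<times> nat) set \<Rightarrow> (int \<times> nat \<Rightarrow> bool) \<Rightarrow> (int \<Rightarrow> nat \<Rightarrow> bool) \<Rightarrow> int \<Rightarrow> nat \<Rightarrow> bool" where
  "override_arrows S b a x k = (if (x, k) \<in> S then b (x, k) else a x k)"

lemma override_arrows_pinned: "pinned S b a \<Longrightarrow> override_arrows S b a = a"
  unfolding pinned_def override_arrows_def by (intro ext) (metis fst_conv snd_conv)

lemma override_arrows_upd:
  "s \<in> S \<Longrightarrow> override_arrows S b (arrows \<omega> (u(s := t))) = override_arrows S b (arrows \<omega> u)"
  unfolding override_arrows_def arrows_def by (intro ext) auto

locale cookie_model =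
  fixes \<mu> :: "cookie_env measure"
  assumes prob_space_env: "prob_space \<mu>" and sets_env: "sets \<mu> = sets env_space"
begin

sublocale joint: prob_space "joint_space \<mu>"
  unfolding joint_space_def by (rule prob_space_pair[OF prob_space_env prob_space_unif_space])

lemma space_joint: "space (joint_space \<mu>) = space \<mu> \<times> UNIV"
  by (simp add: joint_space_def space_pair_measure)

lemma sets_arrow_env: "{p \<in> space (joint_space \<mu>). arrow_env p x k} \<in> sets (joint_space \<mu>)"
proof -
  have "(\<lambda>\<omega>. \<omega> (x, k)) \<in> borel_measurable \<mu>"
    using measurable_component_singleton[of "(x, k)" UNIV "\<lambda>_. borel"] sets_env
    unfolding env_space_def by (simp cong: measurable_cong_sets)
  then have "(\<lambda>p. fst p (x, k)) \<in> borel_measurable (joint_space \<mu>)"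
    unfolding joint_space_def by (rule measurable_compose[OF measurable_fst])
  moreover have "(\<lambda>p. snd p (x, k)) \<in> borel_measurable (joint_space \<mu>)"
    unfolding joint_space_def by (rule measurable_compose[OF measurable_snd measurable_unif_space_coord])
  ultimately show ?thesis
    unfolding arrows_def by (rule borel_measurable_less[rotated])
qed

lemma sets_pinned:
  assumes "finite S"
  shows "{p \<in> space (joint_space \<mu>). pinned S b (arrow_env p)} \<in> sets (joint_space \<mu>)"
  unfolding pinned_def
  by (intro sets.sets_Collect_finite_All assms sets_Collect_bool_comp[OF sets_arrow_env])

lemma sets_Collect_pinned:
  assumes "finite S" "A \<in> sets (joint_space \<mu>)"
  shows "{p \<in> A. pinned S b (arrow_env p)} \<in> sets (joint_space \<mu>)"
proof -
  have "{p \<in> A. pinned S b (arrow_env p)} = A \<inter> {p \<in> space (joint_space \<mu>). pinned S b (arrow_env p)}"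
    using sets.sets_into_space[OF assms(2)] by auto
  then show ?thesis using sets.Int[OF assms(2) sets_pinned[OF assms(1)]] by (simp only:)
qed

lemma exists_pinned_pos:
  assumes "finite S" and A: "A \<in> sets (joint_space \<mu>)" and pos: "emeasure (joint_space \<mu>) A > 0"
  shows "\<exists>b. emeasure (joint_space \<mu>) {p \<in> A. pinned S b (arrow_env p)} > 0"
proof -
  have cover: "A \<subseteq> (\<Union>b\<in>PiE S (\<lambda>_. UNIV). {p \<in> A. pinned S b (arrow_env p)})"
  proof
    fix p assume "p \<in> A"
    then show "p \<in> (\<Union>b\<in>PiE S (\<lambda>_. UNIV). {p \<in> A. pinned S b (arrow_env p)})"
      by (intro UN_I[of "restrict (\<lambda>s. arrow_env p (fst s) (snd s)) S"]) (auto simp: pinned_def)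
  qed
  have "countable (PiE S (\<lambda>_. UNIV :: bool set))"
    using \<open>finite S\<close> by (simp add: countable_finite finite_PiE)
  then show ?thesis
    using emeasure_pos_countable_cover[OF _ cover sets_Collect_pinned[OF \<open>finite S\<close> A] pos] by blast
qed

text \<open>Conditionally on \<open>\<omega>\<close> the uniform variables indexed by \<open>S\<close> are independent of \<open>R\<close>,
  and each prescribed arrow has conditional probability \<open>\<omega> s\<close> or \<open>1 - \<omega> s\<close>.\<close>

lemma emeasure_Int_pinned_pos:
  assumes "finite S" and ell: "AE \<omega> in \<mu>. \<forall>s\<in>S. 0 < \<omega> s \<and> \<omega> s < 1"
    and R: "R \<in> sets (joint_space \<mu>)"
    and indep: "\<forall>\<omega> u s t. s \<in> S \<longrightarrow> ((\<omega>, u) \<in> R \<longleftrightarrow> (\<omega>, u(s := t)) \<in> R)"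
    and pos: "emeasure (joint_space \<mu>) R > 0"
  shows "emeasure (joint_space \<mu>) {p \<in> R. pinned S b (arrow_env p)} > 0"
proof -
  have RC: "{p \<in> R. pinned S b (arrow_env p)} \<in> sets (joint_space \<mu>)"
    using sets_Collect_pinned[OF \<open>finite S\<close> R] .
  have "AE \<omega> in \<mu>. emeasure unif_space (Pair \<omega> -` {p \<in> R. pinned S b (arrow_env p)}) = 0 \<longrightarrow>
      emeasure unif_space (Pair \<omega> -` R) = 0"
    using ell
  proof eventually_elim
    case (elim \<omega>)
    define A where "A s = (if b s then {..<\<omega> s} else {\<omega> s..})" for s
    have "pinned S b (arrows \<omega> u) \<longleftrightarrow> (\<forall>s\<in>S. u s \<in> A s)" for u
      unfolding pinned_def arrows_def A_def by (intro ball_cong refl) (simp add: not_less)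
    then have "Pair \<omega> -` {p \<in> R. pinned S b (arrow_env p)} = Pair \<omega> -` R \<inter> {u. \<forall>s\<in>S. u s \<in> A s}"
      by auto
    moreover have "Pair \<omega> -` R \<in> sets unif_space"
      using R by (intro sets_Pair1) (simp add: joint_space_def)
    moreover have "\<forall>u s t. s \<in> S \<longrightarrow> (u \<in> Pair \<omega> -` R \<longleftrightarrow> u(s := t) \<in> Pair \<omega> -` R)"
      using indep by simp
    moreover have "\<forall>s\<in>S. A s \<in> sets borel"
      by (simp add: A_def)
    ultimately have "emeasure unif_space (Pair \<omega> -` {p \<in> R. pinned S b (arrow_env p)}) =
        (\<Prod>s\<in>S. emeasure unif01 (A s)) * emeasure unif_space (Pair \<omega> -` R)"
      using emeasure_unif_space_Int_coords[OF \<open>finite S\<close>] by simp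
    moreover have "emeasure unif01 (A s) \<noteq> 0" if "s \<in> S" for s
      using elim that emeasure_unif01_split_pos[of "\<omega> s"]
      by (auto simp: A_def simp del: emeasure_uniform_measure)
    ultimately show ?case by simp
  qed
  then show ?thesis
    by (rule emeasure_pair_pos_by_sections[OF prob_space_imp_sigma_finite[OF prob_space_unif_space]
          R[unfolded joint_space_def] RC[unfolded joint_space_def] pos[unfolded joint_space_def],
          folded joint_space_def])
qed

lemma sets_confined_arrow_env:
  "{p \<in> space (joint_space \<mu>). confined m K (arrow_env p)} \<in> sets (joint_space \<mu>)"
  by (rule sets_Collect_confined) (rule sets_arrow_env)

lemma sets_confined_override_arrows:
  "{p \<in> space (joint_space \<mu>). confined m K (override_arrows S b (arrow_env p))} \<in> sets (joint_space \<mu>)"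
proof (rule sets_Collect_confined)
  fix x k
  show "{p \<in> space (joint_space \<mu>). override_arrows S b (arrow_env p) x k} \<in> sets (joint_space \<mu>)"
    by (cases "(x, k) \<in> S") (simp_all add: override_arrows_def sets_arrow_env)
qed

lemma sets_stays_above:
  "{p \<in> space (joint_space \<mu>). \<forall>n. m \<le> erw (arrow_env p) m n} \<in> sets (joint_space \<mu>)"
  unfolding erw_def by (rule sets_Collect_erw_state_all[OF sets_arrow_env, where P = "\<lambda>_ s. m \<le> fst s"])

lemma sets_never_left:
  "{p \<in> space (joint_space \<mu>). \<forall>n. erw (arrow_env p) 0 n \<noteq> -1} \<in> sets (joint_space \<mu>)"
  unfolding erw_def by (rule sets_Collect_erw_state_all[OF sets_arrow_env, where P = "\<lambda>_ s. fst s \<noteq> -1"])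

lemma never_left_pos_imp_transient_pos:
  assumes "nondegenerate \<mu>"
    and "measure (joint_space \<mu>) {p \<in> space (joint_space \<mu>). \<forall>n. erw (arrow_env p) 0 n \<noteq> -1} > 0"
  shows "measure (joint_space \<mu>)
    {p \<in> space (joint_space \<mu>). filterlim (erw (arrow_env p) 0) at_top sequentially} > 0"
proof -
  have "AE p in joint_space \<mu>. p \<in> {p \<in> space (joint_space \<mu>). \<forall>n. erw (arrow_env p) 0 n \<noteq> -1} \<longrightarrow>
      p \<in> {p \<in> space (joint_space \<mu>). filterlim (erw (arrow_env p) 0) at_top sequentially}"
    using assms(1) unfolding nondegenerate_def
    by eventually_elim (use erw_tendsto_at_top_if_never_below[of _ 0] in auto)
  then have "measure (joint_space \<mu>) {p \<in> space (joint_space \<mu>). \<forall>n. erw (arrow_env p) 0 n \<noteq> -1} \<le>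
      measure (joint_space \<mu>) {p \<in> space (joint_space \<mu>). filterlim (erw (arrow_env p) 0) at_top sequentially}"
    by (rule joint.finite_measure_mono_AE[OF _ sets_Collect_erw_tendsto[OF sets_arrow_env]])
  with assms(2) show ?thesis by simp
qed

lemma exists_confined_pos:
  assumes "emeasure (joint_space \<mu>)
    {p \<in> space (joint_space \<mu>). filterlim (erw (arrow_env p) 0) at_top sequentially} > 0"
  shows "\<exists>m\<le>0. \<exists>K. emeasure (joint_space \<mu>) {p \<in> space (joint_space \<mu>). confined m K (arrow_env p)} > 0"
proof -
  have "{p \<in> space (joint_space \<mu>). filterlim (erw (arrow_env p) 0) at_top sequentially} \<subseteq>
      (\<Union>(m, K)\<in>{..0} \<times> UNIV. {p \<in> space (joint_space \<mu>). confined m K (arrow_env p)})"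
    using erw_tendsto_at_top_imp_confined by fastforce
  from emeasure_pos_countable_cover[OF _ this _ assms]
  show ?thesis
    using sets_confined_arrow_env by (force simp: countable_SIGMA)
qed

lemma exists_override_confined_pos:
  assumes "finite S"
    and "emeasure (joint_space \<mu>) {p \<in> space (joint_space \<mu>). confined m K (arrow_env p)} > 0"
  shows "\<exists>b. emeasure (joint_space \<mu>)
    {p \<in> space (joint_space \<mu>). confined m K (override_arrows S b (arrow_env p))} > 0"
proof -
  obtain b where "emeasure (joint_space \<mu>)
      {p \<in> {p \<in> space (joint_space \<mu>). confined m K (arrow_env p)}. pinned S b (arrow_env p)} > 0"
    using exists_pinned_pos[OF assms(1) sets_confined_arrow_env assms(2)] by blast
  also have "\<dots> \<le> emeasure (joint_space \<mu>)
      {p \<in> space (joint_space \<mu>). confined m K (override_arrows S b (arrow_env p))}"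
    by (intro emeasure_mono sets_confined_override_arrows) (auto simp: override_arrows_pinned)
  finally show ?thesis by blast
qed

text \<open>The arrows of the cookies \<open>1, \<dots>, K + 1\<close> at the sites of \<open>[m, 0)\<close> are first frozen
  on a positive event on which the walk is confined; by ellipticity the shifted pattern, a right
  arrow followed by the frozen ones, also has positive probability, and on it the walk started at
  \<open>m\<close> never goes below \<open>m\<close>.\<close>

lemma confined_pos_imp_stays_above_pos:
  assumes "elliptic \<mu>" and m: "m \<le> 0"
    and pos: "emeasure (joint_space \<mu>) {p \<in> space (joint_space \<mu>). confined m K (arrow_env p)} > 0"
  shows "emeasure (joint_space \<mu>) {p \<in> space (joint_space \<mu>). \<forall>n. m \<le> erw (arrow_env p) m n} > 0"
proof -
  define S where "S = {(x, k). m \<le> x \<and> x < 0 \<and> 1 \<le> k \<and> k \<le> Suc K}"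
  have "finite S"
    by (rule finite_subset[of _ "{m..<0} \<times> {1..Suc K}"]) (auto simp: S_def)
  then obtain b where "emeasure (joint_space \<mu>)
      {p \<in> space (joint_space \<mu>). confined m K (override_arrows S b (arrow_env p))} > 0"
    (is "emeasure _ ?R > 0")
    using exists_override_confined_pos[OF _ pos] by blast
  moreover have "\<forall>\<omega> u s t. s \<in> S \<longrightarrow> ((\<omega>, u) \<in> ?R \<longleftrightarrow> (\<omega>, u(s := t)) \<in> ?R)"
    unfolding space_joint by (simp add: override_arrows_upd)
  moreover have "AE \<omega> in \<mu>. \<forall>s\<in>S. 0 < \<omega> s \<and> \<omega> s < 1"
    using \<open>elliptic \<mu>\<close> unfolding elliptic_def by eventually_elim (auto simp: S_def)
  ultimately have "emeasure (joint_space \<mu>) {p \<in> ?R. pinned S (\<lambda>(x, k). k = 1 \<or> b (x, k - 1)) (arrow_env p)} > 0"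
    using emeasure_Int_pinned_pos[OF \<open>finite S\<close> _ sets_confined_override_arrows] by blast
  also have "\<dots> \<le> emeasure (joint_space \<mu>) {p \<in> space (joint_space \<mu>). \<forall>n. m \<le> erw (arrow_env p) m n}"
  proof (intro emeasure_mono sets_stays_above subsetI)
    fix p assume p: "p \<in> {p \<in> ?R. pinned S (\<lambda>(x, k). k = 1 \<or> b (x, k - 1)) (arrow_env p)}"
    then have "confined m K (override_arrows S b (arrow_env p))" by simp
    then have "m \<le> erw (arrow_env p) m n" for n
      by (rule confined_insert_right_arrows[OF m])
        (use p in \<open>auto simp: pinned_def S_def override_arrows_def\<close>)
    with p show "p \<in> {p \<in> space (joint_space \<mu>). \<forall>n. m \<le> erw (arrow_env p) m n}"
      by simp
  qed
  finally show ?thesis .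
qed

end

lemma measurable_shift_env_unif_space: "shift_env \<in> measurable unif_space unif_space"
  unfolding unif_space_def
proof (rule measurable_PiM_single')
  fix i :: "int \<times> nat"
  have "(\<lambda>u. u (fst i + 1, snd i)) \<in> measurable (\<Pi>\<^sub>M i\<in>UNIV. unif01) unif01"
    by (rule measurable_component_singleton) simp
  moreover have "(\<lambda>\<omega>. shift_env \<omega> i) = (\<lambda>u. u (fst i + 1, snd i))"
    by (auto simp: shift_env_def split: prod.split)
  ultimately show "(\<lambda>\<omega>. shift_env \<omega> i) \<in> measurable (\<Pi>\<^sub>M i\<in>UNIV. unif01) unif01" by simp
qed (auto simp: space_PiM)

lemma distr_shift_env_unif_space: "distr unif_space unif_space shift_env = unif_space"
proof -
  define f :: "int \<times> nat \<Rightarrow> int \<times> nat" where "f = (\<lambda>(x, n). (x + 1, n))"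
  have "inj_on f UNIV" unfolding f_def by (auto simp: inj_on_def)
  from distr_PiM_reindex[of UNIV "\<lambda>_. unif01" f UNIV, OF prob_space_unif01 this]
  have "distr (\<Pi>\<^sub>M i\<in>UNIV. unif01) (\<Pi>\<^sub>M i\<in>UNIV. unif01) (\<lambda>\<omega>. \<lambda>n\<in>UNIV. \<omega> (f n)) = (\<Pi>\<^sub>M i\<in>UNIV. unif01)"
    by simp
  moreover have "(\<lambda>\<omega>. \<lambda>n\<in>UNIV. \<omega> (f n)) = shift_env"
    by (auto simp: f_def shift_env_def fun_eq_iff)
  ultimately show ?thesis unfolding unif_space_def by simp
qed

definition shift_joint :: "cookie_env \<times> (int \<times> nat \<Rightarrow> real) \<Rightarrow> cookie_env \<times> (int \<times> nat \<Rightarrow> real)" where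
  "shift_joint p = (shift_env (fst p), shift_env (snd p))"

lemma arrow_env_shift_joint_funpow: "arrow_env ((shift_joint ^^ d) p) = (\<lambda>x. arrow_env p (x + int d))"
proof -
  have "(shift_joint ^^ d) p = (\<lambda>(x, n). fst p (x + int d, n), \<lambda>(x, n). snd p (x + int d, n))"
    by (induction d) (auto simp: shift_joint_def shift_env_def fun_eq_iff algebra_simps)
  then show ?thesis by (auto simp: arrows_def fun_eq_iff)
qed

locale stationary_cookie_model = cookie_model +
  assumes measurable_shift_env: "shift_env \<in> measurable \<mu> \<mu>"
    and distr_shift_env: "distr \<mu> \<mu> shift_env = \<mu>"
begin

lemma measurable_shift_joint: "shift_joint \<in> measurable (joint_space \<mu>) (joint_space \<mu>)"
  unfolding shift_joint_def joint_space_def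
  by (intro measurable_Pair measurable_compose[OF measurable_fst measurable_shift_env]
      measurable_compose[OF measurable_snd measurable_shift_env_unif_space])

lemma distr_shift_joint: "distr (joint_space \<mu>) (joint_space \<mu>) shift_joint = joint_space \<mu>"
proof -
  have "sigma_finite_measure (distr unif_space unif_space shift_env)"
    unfolding distr_shift_env_unif_space by (rule prob_space_imp_sigma_finite[OF prob_space_unif_space])
  then have "distr \<mu> \<mu> shift_env \<Otimes>\<^sub>M distr unif_space unif_space shift_env =
      distr (\<mu> \<Otimes>\<^sub>M unif_space) (\<mu> \<Otimes>\<^sub>M unif_space) (\<lambda>(x, y). (shift_env x, shift_env y))"
    by (rule pair_measure_distr[OF measurable_shift_env measurable_shift_env_unif_space])
  moreover have "(\<lambda>(x, y). (shift_env x, shift_env y)) = shift_joint"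
    by (auto simp: shift_joint_def fun_eq_iff)
  ultimately show ?thesis
    unfolding joint_space_def distr_shift_env distr_shift_env_unif_space by simp
qed

lemma distr_shift_joint_funpow: "distr (joint_space \<mu>) (joint_space \<mu>) (shift_joint ^^ d) = joint_space \<mu>"
proof (induction d)
  case (Suc d)
  have "distr (joint_space \<mu>) (joint_space \<mu>) (shift_joint ^^ Suc d) =
      distr (distr (joint_space \<mu>) (joint_space \<mu>) (shift_joint ^^ d)) (joint_space \<mu>) shift_joint"
    by (simp add: distr_distr[OF measurable_shift_joint measurable_compose_n[OF measurable_shift_joint]])
  then show ?case using Suc distr_shift_joint by (simp add: comp_def)
qed (simp add: distr_id2[symmetric] id_def)

lemma emeasure_stays_above_translate:
  assumes "m \<le> 0"
  shows "emeasure (joint_space \<mu>) {p \<in> space (joint_space \<mu>). \<forall>n. m \<le> erw (arrow_env p) m n} =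
    emeasure (joint_space \<mu>) {p \<in> space (joint_space \<mu>). \<forall>n. 0 \<le> erw (arrow_env p) 0 n}"
proof -
  define d where "d = nat (- m)"
  let ?T = "shift_joint ^^ d"
  let ?A = "{p \<in> space (joint_space \<mu>). \<forall>n. m \<le> erw (arrow_env p) m n}"
  have T: "?T \<in> measurable (joint_space \<mu>) (joint_space \<mu>)"
    by (rule measurable_compose_n[OF measurable_shift_joint])
  have A: "?A \<in> sets (joint_space \<mu>)"
    by (rule sets_stays_above)
  have "erw (arrow_env (?T p)) m n = erw (arrow_env p) 0 n + m" for p n
    using assms erw_translate[of "arrow_env p" "int d" m n]
    by (simp add: arrow_env_shift_joint_funpow d_def)
  then have preimage: "?T -` ?A \<inter> space (joint_space \<mu>) =
      {p \<in> space (joint_space \<mu>). \<forall>n. 0 \<le> erw (arrow_env p) 0 n}"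
    using measurable_space[OF T] by auto
  have "emeasure (joint_space \<mu>) ?A = emeasure (distr (joint_space \<mu>) (joint_space \<mu>) ?T) ?A"
    by (simp only: distr_shift_joint_funpow)
  also have "\<dots> = emeasure (joint_space \<mu>) (?T -` ?A \<inter> space (joint_space \<mu>))"
    by (rule emeasure_distr[OF T A])
  finally show ?thesis unfolding preimage .
qed

lemma transient_pos_imp_never_left_pos:
  assumes "elliptic \<mu>"
    and "measure (joint_space \<mu>)
      {p \<in> space (joint_space \<mu>). filterlim (erw (arrow_env p) 0) at_top sequentially} > 0"
  shows "measure (joint_space \<mu>) {p \<in> space (joint_space \<mu>). \<forall>n. erw (arrow_env p) 0 n \<noteq> -1} > 0"
proof -
  have "emeasure (joint_space \<mu>)
      {p \<in> space (joint_space \<mu>). filterlim (erw (arrow_env p) 0) at_top sequentially} > 0"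
    using assms(2) by (simp add: joint.emeasure_eq_measure)
  then obtain m K where m: "m \<le> 0"
    and "emeasure (joint_space \<mu>) {p \<in> space (joint_space \<mu>). confined m K (arrow_env p)} > 0"
    using exists_confined_pos by blast
  then have "emeasure (joint_space \<mu>) {p \<in> space (joint_space \<mu>). \<forall>n. m \<le> erw (arrow_env p) m n} > 0"
    by (intro confined_pos_imp_stays_above_pos[OF assms(1)])
  then have "emeasure (joint_space \<mu>) {p \<in> space (joint_space \<mu>). \<forall>n. 0 \<le> erw (arrow_env p) 0 n} > 0"
    by (simp only: emeasure_stays_above_translate[OF m])
  also have "\<dots> \<le> emeasure (joint_space \<mu>) {p \<in> space (joint_space \<mu>). \<forall>n. erw (arrow_env p) 0 n \<noteq> -1}"
    by (intro emeasure_mono sets_never_left) (smt (verit) mem_Collect_eq subsetI)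
  finally show ?thesis
    by (simp add: joint.emeasure_eq_measure)
qed

end

theorem corollary3p9:
  fixes \<mu> :: "cookie_env measure"
  assumes "prob_space \<mu>"
    and "sets \<mu> = sets env_space"
    and "AE \<omega> in \<mu>. \<forall>x n. 0 \<le> \<omega> (x, n) \<and> \<omega> (x, n) \<le> 1"
    and "stationary_ergodic \<mu>"
    and "elliptic \<mu>"
    and "nondegenerate \<mu>"
  shows "measure (joint_space \<mu>)
           {p \<in> space (joint_space \<mu>). \<forall>n. erw (arrows (fst p) (snd p)) 0 n \<noteq> -1} > 0
     \<longleftrightarrow> measure (joint_space \<mu>)
           {p \<in> space (joint_space \<mu>). filterlim (erw (arrows (fst p) (snd p)) 0) at_top sequentially} > 0"
proof -
  have "shift_env \<in> measurable \<mu> \<mu>" "distr \<mu> \<mu> shift_env = \<mu>"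
    using assms(4) unfolding stationary_ergodic_def by blast+
  with assms(1,2) interpret stationary_cookie_model \<mu>
    by (simp add: stationary_cookie_model_def cookie_model_def stationary_cookie_model_axioms_def)
  show ?thesis
    using never_left_pos_imp_transient_pos[OF assms(6)] transient_pos_imp_never_left_pos[OF assms(5)]
    by blast
qed

end
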